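(* Let $n$ be an integer with $2^{k_n-1}<n<2^{k_n}$, where $k_n=\lceil\log_2 n\rceil$, and let $T_n^{gfb}=(T_a,T_b)$ be the GFB tree on $n$ leaves, so that $(n_a,n_b)=(n-2^{k_n-2},2^{k_n-2})$ if $n\in(2^{k_n-1},3\cdot2^{k_n-2})$; $(n_a,n_b)=(2^{k_n-1},2^{k_n-2})$ if $n=3\cdot 2^{k_n-2}$; $(n_a,n_b)=(2^{k_n-1},n-2^{k_n-1})$ if $n\in(3\cdot2^{k_n-2},2^{k_n})$. Suppose $\widehat T=(\widehat T_a,\widehat T_b)$ is a rooted binary tree on $n$ leaves whose maximal pending subtrees have $\widehat n_a,\widehat n_b$ leaves with $(\widehat n_a,\widehat n_b)=(n-2^{k_n-2}+j,\,2^{k_n-2}-j)$ with $j\in\{1,\dots,2^{k_n-2}-1\}$ if $n\in(2^{k_n-1},3\cdot2^{k_n-2})$; $(\widehat n_a,\widehat n_b)=(2^{k_n-1}+j,\,2^{k_n-2}-j)$ with $j\in\{1,\dots,2^{k_n-2}-1\}$ if $n=3\cdot2^{k_n-2}$; $(\widehat n_a,\widehat n_b)=(2^{k_n-1}+j,\,n-2^{k_n-1}-j)$ with $j\in\{1,\dots,n-2^{k_n-1}-1\}$ if $n\in(3\cdot2^{k_n-2},2^{k_n})$. Then $c_n=\mathcal{C}(T_n^{gfb})<\mathcal{C}(\widehat T)$; in particular $\widehat T$ does not have minimal Colless index.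
   Context: A rooted binary tree with $n\geq 2$ leaves is a rooted tree whose root has degree 2 and all other internal nodes have degree 3; for $n=1$ it is a single node. Trees are considered up to isomorphism. Every rooted binary tree $T$ with $n\geq2$ leaves decomposes as $T=(T_a,T_b)$ where $T_a,T_b$ are the subtrees rooted at the two children of the root (maximal pending subtrees), with $n_a\geq n_b$ leaves respectively. For an internal node $v$ with children $v_1,v_2$, let $\kappa(v_i)$ be the number of leaves descending from $v_i$ ($1$ if a leaf). The Colless index is $\mathcal{C}(T)=\sum_v|\kappa(v_1)-\kappa(v_2)|$ over internal nodes $v$; $c_n$ is the minimum of $\mathcal{C}$ over rooted binary trees with $n$ leaves. The GFB tree $T_n^{gfb}$ is the output of: start with $n$ single-node trees; while more than one tree remains, remove a tree $u$ of minimal size (number of leaves), then remove a tree $v$ of minimal size among the remaining ones, and insert the tree with a new root whose children are the roots of $u$ and $v$; output the remaining tree. *)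

theory Defs
  imports Complex_Main
begin

text \<open>Rooted binary trees (up to isomorphism; the order of children is irrelevant
for every quantity used below, since all of them are symmetric in the two children).\<close>
datatype rbtree = Leaf | Node rbtree rbtree

fun leaves :: "rbtree \<Rightarrow> nat" where
  "leaves Leaf = 1"
| "leaves (Node l r) = leaves l + leaves r"

fun colless :: "rbtree \<Rightarrow> nat" where
  "colless Leaf = 0"
| "colless (Node l r) =
     (if leaves l \<ge> leaves r then leaves l - leaves r else leaves r - leaves l)
     + colless l + colless r"

definition min_colless :: "nat \<Rightarrow> nat" where
  "min_colless n = (LEAST c. \<exists>t. leaves t = n \<and> colless t = c)"

text \<open>The GFB algorithm, as a (possibly nondeterministic, because of ties) relation:
  gfb_out F t means that starting from the forest F the algorithm can output t.\<close>
inductive gfb_out :: "rbtree list \<Rightarrow> rbtree \<Rightarrow> bool" where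
  single: "gfb_out [t] t"
| step: "\<lbrakk> u \<in> set F; \<forall>w\<in>set F. leaves u \<le> leaves w;
           v \<in> set (remove1 u F); \<forall>w\<in>set (remove1 u F). leaves v \<le> leaves w;
           gfb_out (Node u v # remove1 v (remove1 u F)) t \<rbrakk> \<Longrightarrow> gfb_out F t"

definition is_gfb :: "nat \<Rightarrow> rbtree \<Rightarrow> bool" where
  "is_gfb n t \<longleftrightarrow> gfb_out (replicate n Leaf) t"

end

theory Submission
  imports Defs "HOL-Library.Multiset"
begin

text \<open>Let c(n) (\<open>cmin\<close>) be the Colless index of the maximally balanced tree, and call
gap(x, y) = |x - y| + c(x) + c(y) - c(x + y) the gap of a root split (x, y): the price of splitting
x + y leaves as (x, y) rather than into halves. Halving both parts yields recursions for the gap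
by parity of x and y, from which induction shows that the gap is never negative (so C(T) \<ge> c(n)
for every tree T), that it vanishes when one part is a power of two within a factor 2 of the other,
and that it is positive when 2^(i+1) \<le> x + y \<le> 2^(i+2) and the smaller part is below
max(2^i, x + y - 2^(i+1)), the smaller part of the GFB split; this is exactly the hypothesis on the
split of the competing tree. Throughout the GFB algorithm all tree sizes lie in some
[2^i, 2^(i+1)] with at most one strictly inside, so every merge has gap 0 and the GFB trees
attain c(n).\<close>

function cmin :: "nat \<Rightarrow> nat" where
  "cmin n = (if n \<le> 1 then 0 else cmin (n div 2) + cmin ((n + 1) div 2) + n mod 2)"
  by auto
termination by (relation "measure id") auto

declare cmin.simps [simp del]

lemma cmin_0 [simp]: "cmin 0 = 0"
  and cmin_1 [simp]: "cmin (Suc 0) = 0"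
  and cmin_2 [simp]: "cmin 2 = 0" "cmin (Suc (Suc 0)) = 0"
  by (simp_all add: cmin.simps)

lemma cmin_double: "cmin (2 * m) = 2 * cmin m"
  by (cases "m = 0") (simp_all add: cmin.simps[of "2 * m"])

lemma cmin_odd: "0 < m \<Longrightarrow> cmin (2 * m + 1) = cmin m + cmin (m + 1) + 1"
  by (subst cmin.simps) simp

definition colless_gap :: "nat \<Rightarrow> nat \<Rightarrow> int" where
  "colless_gap x y = \<bar>int x - int y\<bar> + int (cmin x) + int (cmin y) - int (cmin (x + y))"

lemma colless_gap_sym: "colless_gap x y = colless_gap y x"
  unfolding colless_gap_def by (simp add: add.commute abs_minus_commute)

lemma colless_gap_double: "colless_gap (2 * x) (2 * y) = 2 * colless_gap x y"
  using cmin_double[of "x + y"] by (simp add: colless_gap_def cmin_double abs_if)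

lemma colless_gap_even_odd:
  assumes "0 < y"
  shows "colless_gap (2 * x) (2 * y + 1) = colless_gap x y + colless_gap x (y + 1)"
  using cmin_odd[of "x + y"] cmin_odd[of y] cmin_double[of x] assms
  by (simp add: colless_gap_def abs_if algebra_simps)

lemma colless_gap_odd_even:
  assumes "0 < x"
  shows "colless_gap (2 * x + 1) (2 * y) = colless_gap x y + colless_gap (x + 1) y"
  using colless_gap_even_odd[OF assms, of y] colless_gap_sym by metis

lemma colless_gap_odd_odd:
  assumes "0 < x" "0 < y"
  shows "colless_gap (2 * x + 1) (2 * y + 1) =
    colless_gap x (y + 1) + colless_gap (x + 1) y + (if x = y then 0 else 2)"
  using cmin_double[of "x + y + 1"] cmin_odd[of x] cmin_odd[of y] assms
  by (simp add: colless_gap_def abs_if algebra_simps)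

lemma colless_gap_even_1:
  assumes "0 < m"
  shows "colless_gap (2 * m) 1 = colless_gap m 1 + int m - 1"
  using cmin_odd[of m] assms by (simp add: colless_gap_def cmin_double)

lemma colless_gap_odd_1:
  assumes "0 < m"
  shows "colless_gap (2 * m + 1) 1 = colless_gap m 1 + int m + 2"
  using cmin_odd[of m] cmin_double[of "m + 1"] assms by (simp add: colless_gap_def algebra_simps)

lemma colless_gap_1_nonneg: "0 < m \<Longrightarrow> 0 \<le> colless_gap m 1"
proof (induction m rule: less_induct)
  case (less m)
  show ?case
  proof (cases "m = 1")
    case True
    then show ?thesis by (simp add: colless_gap_def)
  next
    case False
    obtain h where "m = 2 * h \<or> m = 2 * h + 1" "0 < h"
      using less.prems False by (metis evenE oddE gr0I mult_0_right add_0)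
    then show ?thesis
      using less.IH[of h] colless_gap_even_1[of h] colless_gap_odd_1[of h] by auto
  qed
qed

lemma colless_gap_1_pos:
  assumes "3 \<le> m"
  shows "0 < colless_gap m 1"
proof -
  obtain h where "m = 2 * h \<or> m = 2 * h + 1" by (metis evenE oddE)
  then show ?thesis
    using assms colless_gap_even_1[of h] colless_gap_odd_1[of h] colless_gap_1_nonneg[of h] by auto
qed

lemma colless_gap_nonneg: "0 < x \<Longrightarrow> 0 < y \<Longrightarrow> 0 \<le> colless_gap x y"
proof (induction "x + y" arbitrary: x y rule: less_induct)
  case less
  show ?case
  proof (cases "x = 1 \<or> y = 1")
    case True
    then show ?thesis using less.prems colless_gap_1_nonneg colless_gap_sym by metis
  next
    case False
    then have "1 < x" "1 < y" using less.prems by auto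
    consider "even x" "even y" | "even x" "odd y" | "odd x" "even y" | "odd x" "odd y" by blast
    then show ?thesis
    proof cases
      case 1
      then obtain a b where "x = 2 * a" "y = 2 * b" by (auto elim!: evenE)
      then show ?thesis using less \<open>1 < x\<close> \<open>1 < y\<close> colless_gap_double by simp
    next
      case 2
      then obtain a b where "x = 2 * a" "y = 2 * b + 1" by (auto elim!: evenE oddE)
      then show ?thesis using less.hyps[of a b] less.hyps[of a "b + 1"] \<open>1 < x\<close> \<open>1 < y\<close>
        colless_gap_even_odd by simp
    next
      case 3
      then obtain a b where "x = 2 * a + 1" "y = 2 * b" by (auto elim!: evenE oddE)
      then show ?thesis using less.hyps[of a b] less.hyps[of "a + 1" b] \<open>1 < x\<close> \<open>1 < y\<close>
        colless_gap_odd_even by simp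
    next
      case 4
      then obtain a b where "x = 2 * a + 1" "y = 2 * b + 1" by (auto elim!: oddE)
      then show ?thesis using less.hyps[of a "b + 1"] less.hyps[of "a + 1" b] \<open>1 < x\<close> \<open>1 < y\<close>
        colless_gap_odd_odd by simp
    qed
  qed
qed

lemma colless_gap_power2_eq_0:
  "2 ^ i \<le> 2 * y \<Longrightarrow> y \<le> 2 * 2 ^ i \<Longrightarrow> colless_gap (2 ^ i) y = 0"
proof (induction i arbitrary: y)
  case 0
  then have "y = 1 \<or> y = 2" by auto
  then show ?case using cmin_odd[of 1] by (auto simp: colless_gap_def)
next
  case (Suc i)
  consider h where "y = 2 * h" | h where "y = 2 * h + 1" by (metis evenE oddE)
  then show ?case
  proof cases
    case 1
    then show ?thesis using Suc colless_gap_double[of "2 ^ i" h] by simp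
  next
    case 2
    show ?thesis
    proof (cases "h = 0")
      case True
      then have "i = 0" "y = 1" using 2 Suc.prems by (auto simp: le_Suc_eq)
      then show ?thesis using cmin_odd[of 1] by (simp add: colless_gap_def)
    next
      case False
      have "2 ^ i \<le> 2 * h"
        using 2 Suc.prems False by (cases i) auto
      then show ?thesis
        using 2 Suc False colless_gap_even_odd[of h "2 ^ i"] by simp
    qed
  qed
qed

lemma colless_gap_pos:
  assumes "2 * 2 ^ i \<le> x + y" "x + y \<le> 4 * 2 ^ i" "0 < y" "y < max (2 ^ i) (x + y - 2 * 2 ^ i)"
  shows "0 < colless_gap x y"
  using assms
proof (induction i arbitrary: x y)
  case 0
  then have "x = 3" "y = 1" by auto
  then show ?case using colless_gap_1_pos by simp
next
  case (Suc i)
  have "y < x" using Suc.prems by auto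
  show ?case
  proof (cases "y = 1")
    case True
    then show ?thesis using Suc.prems colless_gap_1_pos[of x] by simp
  next
    case False
    then have "2 \<le> y" using Suc.prems by simp
    consider "even x" "even y" | "even x" "odd y" | "odd x" "even y" | "odd x" "odd y" by blast
    then show ?thesis
    proof cases
      case 1
      then obtain a b where "x = 2 * a" "y = 2 * b" by (auto elim!: evenE)
      then show ?thesis using Suc.IH[of a b] Suc.prems colless_gap_double by auto
    next
      case 2
      then obtain a b where ab: "x = 2 * a" "y = 2 * b + 1" by (auto elim!: evenE oddE)
      have "0 < colless_gap a b" using Suc.IH[of a b] Suc.prems ab \<open>2 \<le> y\<close> by auto
      moreover have "0 \<le> colless_gap a (b + 1)" using colless_gap_nonneg ab \<open>y < x\<close> by simp
      ultimately show ?thesis using ab colless_gap_even_odd[of b a] \<open>2 \<le> y\<close> by simp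
    next
      case 3
      then obtain a b where ab: "x = 2 * a + 1" "y = 2 * b" by (auto elim!: evenE oddE)
      have "0 < colless_gap (a + 1) b" using Suc.IH[of "a + 1" b] Suc.prems ab \<open>2 \<le> y\<close> by auto
      moreover have "0 \<le> colless_gap a b" using colless_gap_nonneg ab \<open>y < x\<close> \<open>2 \<le> y\<close> by simp
      ultimately show ?thesis using ab colless_gap_odd_even[of a b] \<open>y < x\<close> \<open>2 \<le> y\<close> by simp
    next
      case 4
      then obtain a b where ab: "x = 2 * a + 1" "y = 2 * b + 1" by (auto elim!: oddE)
      have "0 \<le> colless_gap a (b + 1)" "0 \<le> colless_gap (a + 1) b"
        using colless_gap_nonneg ab \<open>y < x\<close> \<open>2 \<le> y\<close> by simp_all
      then show ?thesis using ab colless_gap_odd_odd[of a b] \<open>y < x\<close> \<open>2 \<le> y\<close> by simp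
    qed
  qed
qed

lemma colless_gap_band_eq_0:
  assumes "q = 2 ^ i \<or> q = 2 * 2 ^ i" "2 ^ i \<le> z" "z \<le> 2 * 2 ^ i"
  shows "colless_gap q z = 0"
  using assms colless_gap_power2_eq_0[of i z] colless_gap_power2_eq_0[of "Suc i" z] by auto

lemma leaves_pos: "0 < leaves t"
  by (induction t) auto

lemma colless_Node_cmin_gap:
  "int (colless (Node l r)) = int (cmin (leaves (Node l r))) + colless_gap (leaves l) (leaves r)
     + (int (colless l) - int (cmin (leaves l))) + (int (colless r) - int (cmin (leaves r)))"
  by (simp add: colless_gap_def of_nat_diff)

lemma cmin_le_colless: "cmin (leaves t) \<le> colless t"
proof (induction t)
  case (Node l r)
  then show ?case
    using colless_Node_cmin_gap[of l r] colless_gap_nonneg[OF leaves_pos leaves_pos, of l r] by linarith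
qed simp

lemma cmin_less_colless_Node:
  "0 < colless_gap (leaves l) (leaves r) \<Longrightarrow> cmin (leaves (Node l r)) < colless (Node l r)"
  using colless_Node_cmin_gap[of l r] cmin_le_colless[of l] cmin_le_colless[of r] by linarith

lemma colless_Node_eq_cmin:
  "colless_gap (leaves l) (leaves r) = 0 \<Longrightarrow> colless l = cmin (leaves l) \<Longrightarrow>
    colless r = cmin (leaves r) \<Longrightarrow> colless (Node l r) = cmin (leaves (Node l r))"
  using colless_Node_cmin_gap[of l r] by linarith

lemma size_filter_mset_le_1_D:
  assumes "size (filter_mset P M) \<le> 1" "x \<in># M" "y \<in># M - {#x#}" "P x"
  shows "\<not> P y"
proof
  assume "P y"
  have "{#x, y#} \<subseteq># M"
    using assms(2,3) by (metis insert_DiffM insert_subset_eq_iff mset_subset_eq_single)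
  then have "size (filter_mset P {#x, y#}) \<le> size (filter_mset P M)"
    by (intro size_mset_mono multiset_filter_mono)
  with assms(1,4) \<open>P y\<close> show False by simp
qed

definition gfb_band :: "nat \<Rightarrow> nat multiset \<Rightarrow> bool" where
  "gfb_band i M \<longleftrightarrow> (\<forall>z\<in>#M. 2 ^ i \<le> z \<and> z \<le> 2 * 2 ^ i) \<and>
     size (filter_mset (\<lambda>z. z \<noteq> 2 ^ i \<and> z \<noteq> 2 * 2 ^ i) M) \<le> 1"

context
  fixes i :: nat and M :: "nat multiset" and x y :: nat
  assumes band: "gfb_band i M"
    and x_min: "x \<in># M" "\<forall>z\<in>#M. x \<le> z"
    and y_min: "y \<in># M - {#x#}" "\<forall>z\<in>#M - {#x#}. y \<le> z"
begin

lemma gfb_band_bounds: "z \<in># M \<Longrightarrow> 2 ^ i \<le> z \<and> z \<le> 2 * 2 ^ i"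
  and gfb_band_exceptional: "size (filter_mset (\<lambda>z. z \<noteq> 2 ^ i \<and> z \<noteq> 2 * 2 ^ i) M) \<le> 1"
  using band unfolding gfb_band_def by auto

lemma gfb_merge_in: "y \<in># M"
  using y_min(1) by (rule in_diffD)

lemma gfb_merge_bounds: "2 ^ i \<le> x" "x \<le> y" "y \<le> 2 * 2 ^ i"
  using x_min gfb_merge_in gfb_band_bounds by auto

lemma gfb_merge_colless_gap: "colless_gap x y = 0"
proof -
  have "x = 2 ^ i \<or> x = 2 * 2 ^ i \<or> y = 2 ^ i \<or> y = 2 * 2 ^ i"
    using size_filter_mset_le_1_D[OF gfb_band_exceptional x_min(1) y_min(1)] by blast
  then show ?thesis
    using gfb_merge_bounds colless_gap_band_eq_0[of x i y] colless_gap_band_eq_0[of y i x]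
      colless_gap_sym[of x y] by auto
qed

lemma gfb_band_merge_bottom:
  assumes "x = 2 ^ i" "y = 2 ^ i"
  shows "gfb_band i (add_mset (x + y) (M - {#x#} - {#y#}))"
proof -
  have sub: "M - {#x#} - {#y#} \<subseteq># M"
    by (meson diff_subset_eq_self subset_mset.order_trans)
  then have "\<forall>z\<in>#add_mset (x + y) (M - {#x#} - {#y#}). 2 ^ i \<le> z \<and> z \<le> 2 * 2 ^ i"
    using assms gfb_band_bounds by (auto dest: in_diffD)
  moreover have filter_sub:
    "filter_mset (\<lambda>z. z \<noteq> 2 ^ i \<and> z \<noteq> 2 * 2 ^ i) (add_mset (x + y) (M - {#x#} - {#y#}))
      \<subseteq># filter_mset (\<lambda>z. z \<noteq> 2 ^ i \<and> z \<noteq> 2 * 2 ^ i) M"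
    using assms sub by (simp add: multiset_filter_mono)
  ultimately show ?thesis
    unfolding gfb_band_def using le_trans[OF size_mset_mono[OF filter_sub] gfb_band_exceptional] by blast
qed

lemma gfb_merge_rest_top:
  assumes "\<not> (x = 2 ^ i \<and> y = 2 ^ i)" "z \<in># M - {#x#} - {#y#}"
  shows "z = 2 * 2 ^ i"
proof (rule ccontr)
  assume "z \<noteq> 2 * 2 ^ i"
  have "z \<in># M - {#x#}" using assms(2) by (rule in_diffD)
  then have "y \<le> z" "z \<le> 2 * 2 ^ i"
    using y_min(2) gfb_band_bounds[OF in_diffD] by auto
  then have y_exc: "y \<noteq> 2 ^ i \<and> y \<noteq> 2 * 2 ^ i"
    using assms(1) gfb_merge_bounds \<open>z \<noteq> 2 * 2 ^ i\<close> by auto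
  have "size (filter_mset (\<lambda>z. z \<noteq> 2 ^ i \<and> z \<noteq> 2 * 2 ^ i) (M - {#x#})) \<le> 1"
    by (rule le_trans[OF size_mset_mono[OF multiset_filter_mono[OF diff_subset_eq_self]] gfb_band_exceptional])
  from size_filter_mset_le_1_D[OF this y_min(1) assms(2)] y_exc
  have "z = 2 ^ i \<or> z = 2 * 2 ^ i" by blast
  with y_exc gfb_merge_bounds \<open>y \<le> z\<close> \<open>z \<noteq> 2 * 2 ^ i\<close> show False by linarith
qed

lemma gfb_band_merge_top:
  assumes "\<not> (x = 2 ^ i \<and> y = 2 ^ i)"
  shows "gfb_band (Suc i) (add_mset (x + y) (M - {#x#} - {#y#}))"
proof -
  define R where "R = M - {#x#} - {#y#}"
  note R_top = gfb_merge_rest_top[OF assms, folded R_def]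
  have R_exc: "filter_mset (\<lambda>z. z \<noteq> 2 ^ Suc i \<and> z \<noteq> 2 * 2 ^ Suc i) R = {#}"
    using R_top by simp
  have "size (filter_mset (\<lambda>z. z \<noteq> 2 ^ Suc i \<and> z \<noteq> 2 * 2 ^ Suc i) (add_mset (x + y) R)) \<le> 1"
    unfolding filter_mset_add_mset R_exc by simp
  moreover have "\<forall>z\<in>#add_mset (x + y) R. 2 ^ Suc i \<le> z \<and> z \<le> 2 * 2 ^ Suc i"
    using gfb_merge_bounds by (auto dest: R_top)
  ultimately show ?thesis
    unfolding gfb_band_def R_def by blast
qed

end

lemma mset_map_remove1: "u \<in> set F \<Longrightarrow> mset (map f (remove1 u F)) = mset (map f F) - {#f u#}"
  by (simp add: image_mset_Diff)

lemma gfb_out_leaves: "gfb_out F t \<Longrightarrow> leaves t = sum_list (map leaves F)"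
proof (induction rule: gfb_out.induct)
  case (step u F v t)
  then show ?case
    using sum_list_map_remove1[of u F leaves] sum_list_map_remove1[of v "remove1 u F" leaves] by simp
qed simp

lemma gfb_out_colless:
  "gfb_out F t \<Longrightarrow> gfb_band i (mset (map leaves F)) \<Longrightarrow>
    \<forall>s\<in>set F. colless s = cmin (leaves s) \<Longrightarrow> colless t = cmin (leaves t)"
proof (induction arbitrary: i rule: gfb_out.induct)
  case (step u F v t)
  define M where "M = mset (map leaves F)"
  have u_min: "leaves u \<in># M" "\<forall>z\<in>#M. leaves u \<le> z"
    using step.hyps(1,2) unfolding M_def by auto
  have M_u: "mset (map leaves (remove1 u F)) = M - {#leaves u#}"
    unfolding M_def using step.hyps(1) by (rule mset_map_remove1)
  have v_min: "leaves v \<in># M - {#leaves u#}" "\<forall>z\<in>#M - {#leaves u#}. leaves v \<le> z"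
    using step.hyps(3,4) unfolding M_u[symmetric] set_mset_mset set_map by auto
  note merge = step.prems(1)[folded M_def] u_min v_min
  have "mset (map leaves (Node u v # remove1 v (remove1 u F))) =
      add_mset (leaves u + leaves v) (M - {#leaves u#} - {#leaves v#})"
    using mset_map_remove1[OF step.hyps(3), of leaves] M_u by simp
  then have "\<exists>i'. gfb_band i' (mset (map leaves (Node u v # remove1 v (remove1 u F))))"
    using gfb_band_merge_bottom[OF merge] gfb_band_merge_top[OF merge] by metis
  moreover have "colless (Node u v) = cmin (leaves (Node u v))"
    using colless_Node_eq_cmin gfb_merge_colless_gap[OF merge] step.prems(2) step.hyps(1,3)
    by (meson notin_set_remove1)
  then have "\<forall>s\<in>set (Node u v # remove1 v (remove1 u F)). colless s = cmin (leaves s)"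
    using step.prems(2) by (auto dest: subsetD[OF set_remove1_subset])
  ultimately show ?case using step.IH by blast
qed simp

lemma gfb_out_exists: "F \<noteq> [] \<Longrightarrow> \<exists>t. gfb_out F t"
proof (induction "length F" arbitrary: F rule: less_induct)
  case less
  show ?case
  proof (cases "length F = 1")
    case True
    then obtain s where "F = [s]" by (metis One_nat_def length_0_conv length_Suc_conv)
    then show ?thesis using gfb_out.single by blast
  next
    case False
    obtain u where u: "u \<in> set F" "\<forall>w\<in>set F. leaves u \<le> leaves w"
      using less.prems ex_has_least_nat[of "\<lambda>w. w \<in> set F" _ leaves] by (metis list.set_sel(1))
    have "remove1 u F \<noteq> []"
      using u(1) less.prems False by (cases F) (auto simp: remove1_idem)
    then obtain v where v: "v \<in> set (remove1 u F)" "\<forall>w\<in>set (remove1 u F). leaves v \<le> leaves w"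
      using ex_has_least_nat[of "\<lambda>w. w \<in> set (remove1 u F)" _ leaves] by (metis list.set_sel(1))
    have "2 \<le> length F"
      using False less.prems by (cases "length F") auto
    then have "length (Node u v # remove1 v (remove1 u F)) < length F"
      using u(1) v(1) by (simp add: length_remove1)
    then obtain t where "gfb_out (Node u v # remove1 v (remove1 u F)) t"
      using less.hyps by blast
    then show ?thesis using gfb_out.step u v by blast
  qed
qed

lemma colless_gfb: "is_gfb n t \<Longrightarrow> leaves t = n \<and> colless t = cmin n"
proof -
  assume "is_gfb n t"
  then have gfb: "gfb_out (replicate n Leaf) t" unfolding is_gfb_def .
  have "gfb_band 0 (mset (map leaves (replicate n Leaf)))"
    unfolding gfb_band_def by (induction n) auto
  moreover have "leaves t = n"
    using gfb_out_leaves[OF gfb] by (simp add: sum_list_replicate)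
  ultimately show ?thesis using gfb_out_colless[OF gfb] by simp
qed

lemma min_colless_eq_cmin:
  assumes "0 < n"
  shows "min_colless n = cmin n"
  unfolding min_colless_def
proof (rule Least_equality)
  obtain t where "is_gfb n t"
    using gfb_out_exists[of "replicate n Leaf"] assms unfolding is_gfb_def by auto
  then show "\<exists>t. leaves t = n \<and> colless t = cmin n" using colless_gfb by blast
next
  show "\<exists>t. leaves t = n \<and> colless t = c \<Longrightarrow> cmin n \<le> c" for c
    using cmin_le_colless by blast
qed

theorem theorem6:
  fixes n k :: nat and ta tb :: rbtree
  assumes hk: "k = nat \<lceil>log 2 (real n)\<rceil>"
    and hlow: "2 ^ (k - 1) < n" and hupp: "n < 2 ^ k"
    and hsplit:
      "(2 ^ (k - 1) < n \<and> n < 3 * 2 ^ (k - 2) \<and>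
          (\<exists>j. 1 \<le> j \<and> j \<le> 2 ^ (k - 2) - 1 \<and>
               leaves ta = n - 2 ^ (k - 2) + j \<and> leaves tb = 2 ^ (k - 2) - j))
     \<or> (n = 3 * 2 ^ (k - 2) \<and>
          (\<exists>j. 1 \<le> j \<and> j \<le> 2 ^ (k - 2) - 1 \<and>
               leaves ta = 2 ^ (k - 1) + j \<and> leaves tb = 2 ^ (k - 2) - j))
     \<or> (3 * 2 ^ (k - 2) < n \<and> n < 2 ^ k \<and>
          (\<exists>j. 1 \<le> j \<and> j \<le> n - 2 ^ (k - 1) - 1 \<and>
               leaves ta = 2 ^ (k - 1) + j \<and> leaves tb = n - 2 ^ (k - 1) - j))"
  shows "(\<exists>t. is_gfb n t) \<and>
         (\<forall>t. is_gfb n t \<longrightarrow>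
              min_colless n = colless t \<and> colless t < colless (Node ta tb))"
proof -
  have "2 \<le> k"
  proof (rule ccontr)
    assume "\<not> 2 \<le> k"
    then have "k = 0 \<or> k = 1" by auto
    then show False using hsplit by auto
  qed
  then obtain m where k: "k = m + 2" by (metis le_add_diff_inverse2)
  define a :: nat where "a = 2 ^ (k - 2)"
  have "2 ^ (k - 1) = 2 * a" "2 ^ k = 4 * a"
    unfolding a_def k by (simp_all add: power_add)
  then have split: "leaves ta + leaves tb = n" "2 * a \<le> n" "n \<le> 4 * a" "0 < leaves tb"
    "leaves tb < max a (n - 2 * a)"
    using hsplit hlow hupp unfolding a_def[symmetric] by auto
  then have "0 < colless_gap (leaves ta) (leaves tb)"
    using colless_gap_pos[of "k - 2"] unfolding a_def[symmetric] by simp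
  then have "cmin n < colless (Node ta tb)"
    using cmin_less_colless_Node split(1) by fastforce
  moreover have "\<exists>t. is_gfb n t"
    using gfb_out_exists[of "replicate n Leaf"] split unfolding is_gfb_def by auto
  moreover have "min_colless n = cmin n"
    using min_colless_eq_cmin split by simp
  ultimately show ?thesis
    using colless_gfb by auto
qed

end
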